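(* Let $n\geq 2$, let $U\subset\mathbb{R}^n$ be an open set containing the closed ball $\overline{B(0,1)}$, and let $f:U\rightarrow\mathbb{R}^n$ be a weakly $H$-quasisymmetric embedding with $H=1+\epsilon$, $0\leq\epsilon\leq 1/20$, and $f(\pm e_1)=\pm e_1$. Let $L=e_1^\perp$ be the hyperplane through the origin orthogonal to $e_1$. Then $f(B(0,1))\supset B(f(0),5/6)$ and $\theta_{f(L\cap U)}(f(0),1/2)\leq 20\epsilon$.
   Context: $e_1=(1,0,\dots,0)$. An embedding $f:U\to\mathbb{R}^n$ is weakly $H$-quasisymmetric if $|f(x)-f(y)|\leq H|f(x)-f(z)|$ for all $x,y,z\in U$ with $|x-y|\leq|x-z|$. For $\Sigma\subset\mathbb{R}^n$, $x\in\Sigma$, $r>0$, the local flatness is $\theta_\Sigma(x,r)=\frac1r\min_{L'}\mathrm{HD}[\Sigma\cap B(x,r),(x+L')\cap B(x,r)]$, the minimum over all $(n-1)$-dimensional linear subspaces $L'$, where $\mathrm{HD}[A,B]=\max\{\sup_{a\in A}\mathrm{dist}(a,B),\sup_{b\in B}\mathrm{dist}(b,A)\}$ is the Hausdorff distance. *)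

theory Defs
  imports "HOL-Analysis.Analysis"
begin

definition weakly_qs :: "real \<Rightarrow> 'a::euclidean_space set \<Rightarrow> ('a \<Rightarrow> 'a) \<Rightarrow> bool" where
  "weakly_qs H U f \<longleftrightarrow>
     (\<forall>x\<in>U. \<forall>y\<in>U. \<forall>z\<in>U. norm (x - y) \<le> norm (x - z) \<longrightarrow>
        norm (f x - f y) \<le> H * norm (f x - f z))"

definition embedding_on :: "'a::euclidean_space set \<Rightarrow> ('a \<Rightarrow> 'a) \<Rightarrow> bool" where
  "embedding_on U f \<longleftrightarrow> (\<exists>g. homeomorphism U (f ` U) f g)"

text \<open>Hausdorff distance (used for nonempty bounded sets).\<close>
definition HD :: "'a::euclidean_space set \<Rightarrow> 'a set \<Rightarrow> real" where
  "HD A B = max (SUP a\<in>A. infdist a B) (SUP b\<in>B. infdist b A)"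

text \<open>Local flatness theta_Sigma(x,r); min over (n-1)-dim linear subspaces.\<close>
definition theta :: "'a::euclidean_space set \<Rightarrow> 'a \<Rightarrow> real \<Rightarrow> real" where
  "theta S x r = (1 / r) *
     Inf {HD (S \<inter> ball x r) (((+) x ` L') \<inter> ball x r) | L'.
            subspace L' \<and> dim L' = DIM('a) - 1}"

end

theory Submission
  imports Defs
begin

text \<open>
  Comparing distances from \<open>x\<close> to \<open>\<plusminus>e\<^sub>1\<close>, weak quasisymmetry gives
  \<open>|f x + e\<^sub>1| \<le> H |f x - e\<^sub>1|\<close> whenever \<open>x \<bullet> e\<^sub>1 \<le> 0\<close>; since
  \<open>|y + e|\<^sup>2 - |y - e|\<^sup>2 = 4 y \<bullet> e\<close>, this means \<open>f x \<bullet> e\<^sub>1 \<le> (H\<^sup>2 - 1)/4 \<cdot> |f x - e\<^sub>1|\<^sup>2 = O(\<epsilon>)\<close>,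
  and symmetrically on the other side. Hence near \<open>f 0\<close> the image of \<open>e\<^sub>1\<^sup>\<bottom>\<close> lies in a slab of
  width \<open>O(\<epsilon>)\<close> around \<open>f 0 + e\<^sub>1\<^sup>\<bottom>\<close>, and conversely every vertical segment of height
  \<open>\<plusminus>6\<epsilon>\<close> through that hyperplane must cross it, because the preimages of its endpoints lie on
  opposite sides of \<open>e\<^sub>1\<^sup>\<bottom>\<close>. For the ball, points of the unit sphere are mapped at distance
  at least \<open>1/H\<close> from \<open>f 0\<close>, and invariance of domain plus connectedness of the ball
  \<open>B(f 0, 5/6)\<close> do the rest.
\<close>

lemma norm_add_sq_minus_norm_diff_sq:
  fixes y e :: "'a::real_inner"
  shows "(norm (y + e))\<^sup>2 - (norm (y - e))\<^sup>2 = 4 * (y \<bullet> e)"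
  by (simp add: power2_norm_eq_inner inner_add_left inner_add_right inner_diff_left
      inner_diff_right inner_commute)

lemma norm_add_le_norm_diff_iff:
  fixes y e :: "'a::real_inner"
  shows "norm (y + e) \<le> norm (y - e) \<longleftrightarrow> y \<bullet> e \<le> 0"
  using norm_add_sq_minus_norm_diff_sq[of y e] unfolding norm_le
  by (auto simp: power2_norm_eq_inner)

lemma inner_le_of_norm_add_le:
  fixes y e :: "'a::real_inner"
  assumes "0 \<le> H" "norm (y + e) \<le> H * norm (y - e)"
  shows "4 * (y \<bullet> e) \<le> (H\<^sup>2 - 1) * (norm (y - e))\<^sup>2"
proof -
  have "(norm (y + e))\<^sup>2 \<le> (H * norm (y - e))\<^sup>2"
    using assms by (intro power_mono) auto
  then show ?thesis
    using norm_add_sq_minus_norm_diff_sq[of y e] by (simp add: power_mult_distrib algebra_simps)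
qed

lemma deviation_constant_le:
  fixes \<epsilon> :: real
  assumes "0 \<le> \<epsilon>" "\<epsilon> \<le> 1/20"
  shows "((1 + \<epsilon>)\<^sup>2 - 1) * ((1/2 + 2 * (1 + \<epsilon>))\<^sup>2 + (2 * (1 + \<epsilon>))\<^sup>2) \<le> 24 * \<epsilon>"
proof -
  have "(1 + \<epsilon>)\<^sup>2 - 1 \<le> 41/20 * \<epsilon>"
    using mult_left_mono[OF assms(2,1)] by (simp add: power2_eq_square algebra_simps)
  moreover have "(1/2 + 2 * (1 + \<epsilon>))\<^sup>2 + (2 * (1 + \<epsilon>))\<^sup>2 \<le> 1117/100"
  proof -
    have "(1/2 + 2 * (1 + \<epsilon>))\<^sup>2 \<le> (26/10)\<^sup>2" "(2 * (1 + \<epsilon>))\<^sup>2 \<le> (21/10)\<^sup>2"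
      using assms by (intro power_mono; simp)+
    then show ?thesis by (simp add: power2_eq_square)
  qed
  ultimately have "((1 + \<epsilon>)\<^sup>2 - 1) * ((1/2 + 2 * (1 + \<epsilon>))\<^sup>2 + (2 * (1 + \<epsilon>))\<^sup>2)
      \<le> (41/20 * \<epsilon>) * (1117/100)"
    using assms by (intro mult_mono) (auto simp: power2_eq_square)
  then show ?thesis using assms by simp
qed

lemma exists_shrink_into_half_ball:
  fixes r \<delta> :: real
  assumes "0 \<le> r" "r < 1/2" "0 < \<delta>" "\<delta> \<le> 31/100"
  shows "\<exists>s. 0 \<le> s \<and> s \<le> 1 \<and> (s * r)\<^sup>2 + \<delta>\<^sup>2 < 1/4 \<and> (1 - s) * r \<le> 2 * \<delta>\<^sup>2"
proof (cases "r\<^sup>2 + \<delta>\<^sup>2 < 1/4")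
  case True
  then show ?thesis by (intro exI[of _ 1]) (simp add: assms)
next
  case False
  have \<delta>2: "\<delta>\<^sup>2 \<le> 961/10000"
    using assms power_mono[of \<delta> "31/100" 2] by (simp add: power2_eq_square)
  have "r \<ge> 39/100"
  proof (rule ccontr)
    assume "\<not> r \<ge> 39/100"
    then have "r\<^sup>2 \<le> (39/100)\<^sup>2" using assms by (intro power_mono) auto
    then show False using False \<delta>2 by (simp add: power2_eq_square)
  qed
  define s where "s = (r - 2 * \<delta>\<^sup>2) / r"
  have sr: "s * r = r - 2 * \<delta>\<^sup>2" using \<open>r \<ge> 39/100\<close> by (simp add: s_def)
  \<comment> \<open>Moving the centre inwards by \<open>2\<delta>\<^sup>2\<close> gains more than \<open>\<delta>\<^sup>2\<close> in \<open>(s r)\<^sup>2\<close> because \<open>r\<close> is close to \<open>1/2\<close>.\<close>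
  have "(s * r)\<^sup>2 + \<delta>\<^sup>2 = r\<^sup>2 + \<delta>\<^sup>2 * (1 + 4 * \<delta>\<^sup>2 - 4 * r)"
    unfolding sr by (simp add: power2_eq_square algebra_simps)
  moreover have "\<delta>\<^sup>2 * (1 + 4 * \<delta>\<^sup>2 - 4 * r) \<le> 0"
    using \<delta>2 \<open>r \<ge> 39/100\<close> by (intro mult_nonneg_nonpos) auto
  moreover have "r\<^sup>2 < 1/4"
    using assms power_strict_mono[of r "1/2" 2] by (simp add: power_divide)
  ultimately have "(s * r)\<^sup>2 + \<delta>\<^sup>2 < 1/4" by linarith
  moreover have "0 \<le> s" "s \<le> 1"
    using \<open>r \<ge> 39/100\<close> \<delta>2 by (auto simp: s_def field_simps)
  ultimately show ?thesis using sr by (intro exI[of _ s]) (simp add: left_diff_distrib)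
qed

lemma vertical_offset_le:
  fixes \<epsilon> t :: real
  assumes "0 \<le> \<epsilon>" "\<epsilon> \<le> 1/20" "0 < t" "t \<le> 1/100"
  shows "(6 * \<epsilon> + t) + 2 * (6 * \<epsilon> + t)\<^sup>2 \<le> 10 * \<epsilon> + 3 * t"
proof -
  have "\<epsilon> * \<epsilon> \<le> \<epsilon> / 20" "\<epsilon> * t \<le> t / 20" "t * t \<le> t / 100"
    using mult_left_mono[OF assms(2,1)] mult_right_mono[OF assms(2)] mult_left_mono[OF assms(4)] assms
    by auto
  moreover have "(6 * \<epsilon> + t)\<^sup>2 = 36 * (\<epsilon> * \<epsilon>) + 12 * (\<epsilon> * t) + t * t"
    by (simp add: power2_eq_square algebra_simps)
  ultimately show ?thesis using assms by linarith
qed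

lemma ball_subset_image_ball:
  fixes f :: "'a::euclidean_space \<Rightarrow> 'a"
  assumes cont: "continuous_on (cball a \<rho>) f" and inj: "inj_on f (cball a \<rho>)" and "0 < \<rho>" "0 < r"
    and far: "\<And>x. x \<in> sphere a \<rho> \<Longrightarrow> r \<le> dist (f a) (f x)"
  shows "ball (f a) r \<subseteq> f ` ball a \<rho>"
proof -
  have "open (f ` ball a \<rho>)"
    using cont inj by (intro invariance_of_domain) (auto elim: continuous_on_subset inj_on_subset)
  moreover have "open (- f ` cball a \<rho>)"
    using cont by (intro open_Compl compact_imp_closed compact_continuous_image) auto
  moreover have inside: "ball (f a) r \<inter> f ` cball a \<rho> \<subseteq> f ` ball a \<rho>"
  proof clarify
    fix x assume "f x \<in> ball (f a) r" "x \<in> cball a \<rho>"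
    then have "x \<notin> sphere a \<rho>" using far by force
    then show "f x \<in> f ` ball a \<rho>" using \<open>x \<in> cball a \<rho>\<close> by auto
  qed
  ultimately have "f ` ball a \<rho> \<inter> ball (f a) r = {} \<or> - f ` cball a \<rho> \<inter> ball (f a) r = {}"
    by (intro connectedD[OF connected_ball]) auto
  moreover have "f a \<in> f ` ball a \<rho> \<inter> ball (f a) r"
    using \<open>0 < \<rho>\<close> \<open>0 < r\<close> by auto
  ultimately show ?thesis using inside by blast
qed

lemma HD_nonneg:
  fixes A B :: "'a::euclidean_space set"
  assumes "A \<noteq> {}" "B \<noteq> {}" "bounded A"
  shows "0 \<le> HD A B"
proof -
  obtain a b where "a \<in> A" "b \<in> B" using assms by blast
  obtain R where R: "\<And>x. x \<in> A \<Longrightarrow> dist b x \<le> R"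
    using \<open>bounded A\<close> unfolding bounded_any_center[of _ b] by blast
  have "bdd_above ((\<lambda>x. infdist x B) ` A)"
  proof (rule bdd_aboveI2)
    fix x assume "x \<in> A"
    show "infdist x B \<le> R"
      using infdist_le[OF \<open>b \<in> B\<close>, of x] R[OF \<open>x \<in> A\<close>] by (simp add: dist_commute)
  qed
  then have "infdist a B \<le> (SUP x\<in>A. infdist x B)"
    using \<open>a \<in> A\<close> by (rule cSUP_upper2) simp
  then show ?thesis using infdist_nonneg[of a B] unfolding HD_def by linarith
qed

lemma HD_le:
  fixes A B :: "'a::euclidean_space set"
  assumes "A \<noteq> {}" "B \<noteq> {}"
    and "\<And>a. a \<in> A \<Longrightarrow> infdist a B \<le> d" "\<And>b. b \<in> B \<Longrightarrow> infdist b A \<le> d"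
  shows "HD A B \<le> d"
  unfolding HD_def using assms by (simp add: cSUP_least)

lemma theta_le_HD:
  fixes S L :: "'a::euclidean_space set"
  assumes "x \<in> S" "0 < r" "subspace L" "dim L = DIM('a) - 1"
  shows "theta S x r \<le> HD (S \<inter> ball x r) ((+) x ` L \<inter> ball x r) / r"
proof -
  let ?X = "{HD (S \<inter> ball x r) ((+) x ` L' \<inter> ball x r) | L'. subspace L' \<and> dim L' = DIM('a) - 1}"
  have "bdd_below ?X"
  proof (rule bdd_belowI, clarify)
    fix L' :: "'a set" assume "subspace L'"
    then have "x \<in> (+) x ` L' \<inter> ball x r"
      using \<open>0 < r\<close> subspace_0 by force
    then show "0 \<le> HD (S \<inter> ball x r) ((+) x ` L' \<inter> ball x r)"
      using assms by (intro HD_nonneg) auto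
  qed
  then have "Inf ?X \<le> HD (S \<inter> ball x r) ((+) x ` L \<inter> ball x r)"
    using assms by (intro cInf_lower) auto
  then show ?thesis
    using \<open>0 < r\<close> unfolding theta_def by (simp add: divide_right_mono)
qed

lemma infdist_translated_hyperplane_le:
  fixes a p e :: "'a::euclidean_space"
  assumes "norm e = 1" "a \<in> ball p r"
  shows "infdist a ((+) p ` {x. x \<bullet> e = 0} \<inter> ball p r) \<le> \<bar>(a - p) \<bullet> e\<bar>"
proof -
  define t where "t = (a - p) \<bullet> e"
  define w where "w = (a - p) - t *\<^sub>R e"
  have "w \<bullet> e = 0"
    using assms(1) by (simp add: w_def t_def inner_diff_left power2_norm_eq_inner[symmetric])
  then have "(norm (w + t *\<^sub>R e))\<^sup>2 = (norm w)\<^sup>2 + (norm (t *\<^sub>R e))\<^sup>2"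
    by (intro norm_add_Pythagorean) (simp add: orthogonal_def)
  then have "(norm w)\<^sup>2 \<le> (norm (a - p))\<^sup>2"
    by (simp add: w_def)
  then have "norm w \<le> norm (a - p)"
    by (rule power2_le_imp_le) simp
  then have "p + w \<in> (+) p ` {x. x \<bullet> e = 0} \<inter> ball p r"
    using \<open>w \<bullet> e = 0\<close> assms(2) by (auto simp: dist_norm norm_minus_commute)
  then have "infdist a ((+) p ` {x. x \<bullet> e = 0} \<inter> ball p r) \<le> dist a (p + w)"
    by (rule infdist_le)
  also have "\<dots> = \<bar>t\<bar>"
    using assms(1) by (simp add: dist_norm w_def algebra_simps)
  finally show ?thesis by (simp add: t_def)
qed

locale normalized_weakly_qs =
  fixes U :: "'a::euclidean_space set" and f :: "'a \<Rightarrow> 'a" and e :: 'a and \<epsilon> :: real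
  assumes norm_e: "norm e = 1"
    and cball_subset: "cball 0 1 \<subseteq> U"
    and embedding: "embedding_on U f"
    and weakly_qs: "weakly_qs (1 + \<epsilon>) U f"
    and eps_nonneg: "0 \<le> \<epsilon>" and eps_le: "\<epsilon> \<le> 1/20"
    and f_e: "f e = e" and f_minus_e: "f (- e) = - e"
begin

abbreviation e_perp :: "'a set" where "e_perp \<equiv> {x. x \<bullet> e = 0}"

abbreviation image_piece :: "'a set" where
  "image_piece \<equiv> f ` (e_perp \<inter> U) \<inter> ball (f 0) (1/2)"

abbreviation flat_piece :: "'a set" where
  "flat_piece \<equiv> (+) (f 0) ` e_perp \<inter> ball (f 0) (1/2)"

lemma normalized_weakly_qs_minus_e: "normalized_weakly_qs U f (- e) \<epsilon>"
  using norm_e cball_subset embedding weakly_qs eps_nonneg eps_le f_e f_minus_e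
  by unfold_locales auto

lemma qs_le:
  assumes "x \<in> U" "y \<in> U" "z \<in> U" "norm (x - y) \<le> norm (x - z)"
  shows "norm (f x - f y) \<le> (1 + \<epsilon>) * norm (f x - f z)"
  using weakly_qs assms unfolding weakly_qs_def by blast

lemma mem_U: "0 \<in> U" "e \<in> U" "- e \<in> U"
  using cball_subset norm_e by auto

lemma norm_e_minus_minus_e: "norm (e - - e) = 2"
  using norm_e by (simp flip: scaleR_2)

lemma norm_f0_minus_e: "norm (f 0 - e) \<le> 2 * (1 + \<epsilon>)"
proof -
  have "norm (f e - f 0) \<le> (1 + \<epsilon>) * norm (f e - f (- e))"
    using mem_U norm_e norm_e_minus_minus_e by (intro qs_le) auto
  then show ?thesis
    using norm_e_minus_minus_e by (simp add: f_e f_minus_e norm_minus_commute)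
qed

lemma inner_image_le:
  assumes "x \<in> U" "x \<bullet> e \<le> 0"
  shows "4 * (f x \<bullet> e) \<le> ((1 + \<epsilon>)\<^sup>2 - 1) * (norm (f x - e))\<^sup>2"
proof (rule inner_le_of_norm_add_le)
  show "0 \<le> 1 + \<epsilon>" using eps_nonneg by simp
  have "norm (x - - e) \<le> norm (x - e)"
    using assms(2) norm_add_le_norm_diff_iff[of x e] by simp
  then show "norm (f x + e) \<le> (1 + \<epsilon>) * norm (f x - e)"
    using qs_le[OF assms(1) mem_U(3,2)] by (simp add: f_e f_minus_e)
qed

lemma inner_deviation_le:
  assumes "x \<in> U" "x \<bullet> e \<le> 0" "f x \<in> ball (f 0) (1/2)"
  shows "(f x - f 0) \<bullet> e \<le> 6 * \<epsilon>"
proof -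
  let ?c = "(1 + \<epsilon>)\<^sup>2 - 1"
  have c: "0 \<le> ?c" using eps_nonneg one_le_power[of "1 + \<epsilon>" 2] by simp
  have "norm (f x - e) \<le> norm (f x - f 0) + norm (f 0 - e)"
    using norm_triangle_ineq[of "f x - f 0" "f 0 - e"] by simp
  then have "norm (f x - e) \<le> 1/2 + 2 * (1 + \<epsilon>)"
    using assms(3) norm_f0_minus_e by (simp add: dist_norm norm_minus_commute)
  then have "?c * (norm (f x - e))\<^sup>2 \<le> ?c * (1/2 + 2 * (1 + \<epsilon>))\<^sup>2"
    using c by (intro mult_left_mono power_mono) auto
  then have "4 * (f x \<bullet> e) \<le> ?c * (1/2 + 2 * (1 + \<epsilon>))\<^sup>2"
    using inner_image_le[OF assms(1,2)] by linarith
  moreover have "?c * (norm (f 0 - - e))\<^sup>2 \<le> ?c * (2 * (1 + \<epsilon>))\<^sup>2"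
    using c normalized_weakly_qs.norm_f0_minus_e[OF normalized_weakly_qs_minus_e] by (intro mult_left_mono power_mono) auto
  then have "4 * (f 0 \<bullet> - e) \<le> ?c * (2 * (1 + \<epsilon>))\<^sup>2"
    using normalized_weakly_qs.inner_image_le[OF normalized_weakly_qs_minus_e mem_U(1)] by simp
  ultimately have "4 * ((f x - f 0) \<bullet> e) \<le> ?c * ((1/2 + 2 * (1 + \<epsilon>))\<^sup>2 + (2 * (1 + \<epsilon>))\<^sup>2)"
    by (simp add: inner_diff_left distrib_left)
  then show ?thesis using deviation_constant_le[OF eps_nonneg eps_le] by linarith
qed

lemma inner_deviation_ge:
  assumes "x \<in> U" "0 \<le> x \<bullet> e" "f x \<in> ball (f 0) (1/2)"
  shows "(f 0 - f x) \<bullet> e \<le> 6 * \<epsilon>"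
  using normalized_weakly_qs.inner_deviation_le[OF normalized_weakly_qs_minus_e] assms
  by (simp add: inner_diff_left)

lemma dist_f0_sphere:
  assumes "x \<in> U" "norm x = 1"
  shows "1 \<le> (1 + \<epsilon>) * dist (f 0) (f x)"
proof -
  have "norm (f 0 - e) \<le> (1 + \<epsilon>) * norm (f 0 - f x)"
    using qs_le[OF mem_U(1,2) assms(1)] assms(2) norm_e by (simp add: f_e)
  moreover have "norm (f 0 - - e) \<le> (1 + \<epsilon>) * norm (f 0 - f x)"
    using qs_le[OF mem_U(1,3) assms(1)] assms(2) norm_e by (simp add: f_minus_e)
  moreover have "norm (e - - e) \<le> norm (e - f 0) + norm (f 0 - - e)"
    using norm_triangle_ineq[of "e - f 0" "f 0 - - e"] by simp
  ultimately show ?thesis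
    using norm_e_minus_minus_e by (simp add: dist_norm norm_minus_commute)
qed

lemma ball_subset_image: "ball (f 0) (5/6) \<subseteq> f ` ball 0 1"
proof (rule ball_subset_image_ball)
  obtain g where hom: "homeomorphism U (f ` U) f g"
    using embedding unfolding embedding_on_def by blast
  show "continuous_on (cball 0 1) f"
    using homeomorphism_cont1[OF hom] cball_subset by (rule continuous_on_subset)
  show "inj_on f (cball 0 1)"
    using homeomorphism_apply1[OF hom] cball_subset by (intro inj_on_inverseI[where g = g]) blast
  fix x assume "x \<in> sphere (0::'a) 1"
  then have "1 \<le> (1 + \<epsilon>) * dist (f 0) (f x)"
    using cball_subset by (intro dist_f0_sphere) auto
  moreover have "(1 + \<epsilon>) * dist (f 0) (f x) \<le> 21/20 * dist (f 0) (f x)"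
    using eps_le by (intro mult_right_mono) auto
  ultimately show "5/6 \<le> dist (f 0) (f x)" by linarith
qed auto

lemma segment_meets_image_hyperplane:
  assumes seg: "closed_segment (q - \<delta> *\<^sub>R e) (q + \<delta> *\<^sub>R e) \<subseteq> ball (f 0) (1/2)"
    and q: "(q - f 0) \<bullet> e = 0" and \<delta>: "6 * \<epsilon> < \<delta>"
  shows "\<exists>y \<in> closed_segment (q - \<delta> *\<^sub>R e) (q + \<delta> *\<^sub>R e). y \<in> f ` (e_perp \<inter> U)"
proof -
  let ?\<Gamma> = "closed_segment (q - \<delta> *\<^sub>R e) (q + \<delta> *\<^sub>R e)"
  obtain g where hom: "homeomorphism U (f ` U) f g"
    using embedding unfolding embedding_on_def by blast
  have "ball (f 0) (1/2) \<subseteq> ball (f 0) (5/6)" by (rule subset_ball) simp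
  also have "\<dots> \<subseteq> f ` ball 0 1" by (rule ball_subset_image)
  also have "\<dots> \<subseteq> f ` U" using cball_subset by (intro image_mono) auto
  finally have "ball (f 0) (1/2) \<subseteq> f ` U" .
  then have \<Gamma>: "?\<Gamma> \<subseteq> f ` U" using seg by blast
  have g: "g y \<in> U" "f (g y) = y" if "y \<in> ?\<Gamma>" for y
    using \<Gamma> that homeomorphism_apply2[OF hom] hom by (auto simp: homeomorphism_def)
  have "connected (g ` ?\<Gamma>)"
    by (intro connected_continuous_image continuous_on_subset[OF homeomorphism_cont2[OF hom] \<Gamma>]) auto
  moreover have "g (q - \<delta> *\<^sub>R e) \<bullet> e \<le> 0"
  proof (rule ccontr)
    assume "\<not> g (q - \<delta> *\<^sub>R e) \<bullet> e \<le> 0"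
    then have "(f 0 - (q - \<delta> *\<^sub>R e)) \<bullet> e \<le> 6 * \<epsilon>"
      using inner_deviation_ge[of "g (q - \<delta> *\<^sub>R e)"] g[of "q - \<delta> *\<^sub>R e"] seg by auto
    then show False using q \<delta> norm_e by (simp add: inner_diff_left algebra_simps dot_square_norm)
  qed
  moreover have "0 \<le> g (q + \<delta> *\<^sub>R e) \<bullet> e"
  proof (rule ccontr)
    assume "\<not> 0 \<le> g (q + \<delta> *\<^sub>R e) \<bullet> e"
    then have "(q + \<delta> *\<^sub>R e - f 0) \<bullet> e \<le> 6 * \<epsilon>"
      using inner_deviation_le[of "g (q + \<delta> *\<^sub>R e)"] g[of "q + \<delta> *\<^sub>R e"] seg by auto
    then show False using q \<delta> norm_e by (simp add: inner_diff_left algebra_simps dot_square_norm)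
  qed
  ultimately have "\<exists>z \<in> g ` ?\<Gamma>. e \<bullet> z = 0"
    using connected_ivt_hyperplane[of "g ` ?\<Gamma>" "g (q - \<delta> *\<^sub>R e)" "g (q + \<delta> *\<^sub>R e)" e 0]
    by (simp add: inner_commute)
  then show ?thesis using g by (force simp: inner_commute)
qed

lemma infdist_image_hyperplane_le:
  assumes b: "b \<in> flat_piece"
    and \<delta>: "6 * \<epsilon> < \<delta>" "\<delta> \<le> 31/100"
  shows "infdist b image_piece \<le> \<delta> + 2 * \<delta>\<^sup>2"
proof -
  obtain w where w: "w \<bullet> e = 0" "b = f 0 + w" using b by auto
  have "norm w < 1/2" using b w(2) by (simp add: dist_norm)
  moreover have "0 < \<delta>" using \<delta> eps_nonneg by linarith
  ultimately obtain s where s: "0 \<le> s" "s \<le> 1" "(s * norm w)\<^sup>2 + \<delta>\<^sup>2 < 1/4"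
      "(1 - s) * norm w \<le> 2 * \<delta>\<^sup>2"
    using exists_shrink_into_half_ball \<delta>(2) by (meson norm_ge_zero)
  \<comment> \<open>The vertical segment through \<open>b\<close> may leave the ball, so use one through a point \<open>q\<close> pulled towards \<open>f 0\<close>.\<close>
  define q where "q = f 0 + s *\<^sub>R w"
  have vertical: "q + t *\<^sub>R e \<in> ball (f 0) (1/2)" if "\<bar>t\<bar> \<le> \<delta>" for t
  proof -
    have "(norm (s *\<^sub>R w + t *\<^sub>R e))\<^sup>2 = (norm (s *\<^sub>R w))\<^sup>2 + (norm (t *\<^sub>R e))\<^sup>2"
      using w(1) by (intro norm_add_Pythagorean) (simp add: orthogonal_def)
    also have "\<dots> \<le> (s * norm w)\<^sup>2 + \<delta>\<^sup>2"
      using s(1) norm_e power_mono[OF that abs_ge_zero, of 2] by (simp add: power_mult_distrib)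
    finally have "(norm (s *\<^sub>R w + t *\<^sub>R e))\<^sup>2 < (1/2)\<^sup>2" using s(3) by (simp add: power_divide)
    then have "norm (s *\<^sub>R w + t *\<^sub>R e) < 1/2" by (rule power_less_imp_less_base) simp
    then show ?thesis by (simp add: q_def dist_norm norm_minus_commute add.commute)
  qed
  have seg: "closed_segment (q - \<delta> *\<^sub>R e) (q + \<delta> *\<^sub>R e) \<subseteq> ball (f 0) (1/2)"
    using vertical[of "- \<delta>"] vertical[of \<delta>] \<open>0 < \<delta>\<close>
    by (intro closed_segment_subset convex_ball) auto
  have "(q - f 0) \<bullet> e = 0" using w(1) by (simp add: q_def)
  then obtain y where y: "y \<in> closed_segment (q - \<delta> *\<^sub>R e) (q + \<delta> *\<^sub>R e)"
      "y \<in> f ` (e_perp \<inter> U)"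
    using segment_meets_image_hyperplane[OF seg _ \<delta>(1)] by blast
  have "closed_segment (q - \<delta> *\<^sub>R e) (q + \<delta> *\<^sub>R e) \<subseteq> cball q \<delta>"
    using \<open>0 < \<delta>\<close> norm_e by (intro closed_segment_subset convex_cball) (auto simp: dist_norm)
  then have "dist q y \<le> \<delta>" using y(1) by auto
  moreover have "dist b q \<le> 2 * \<delta>\<^sup>2"
  proof -
    have "b - q = (1 - s) *\<^sub>R w" by (simp add: w(2) q_def algebra_simps)
    then show ?thesis using s(2,4) by (simp add: dist_norm)
  qed
  moreover have "infdist b image_piece \<le> dist b y"
    using y seg by (intro infdist_le) auto
  ultimately show ?thesis using dist_triangle[of b y q] by linarith
qed

lemma HD_image_hyperplane_le:
  "HD image_piece flat_piece \<le> 10 * \<epsilon>"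
proof (rule HD_le)
  show "image_piece \<noteq> {}"
    using mem_U(1) by force
  show "flat_piece \<noteq> {}"
    by (force intro: image_eqI[of _ _ 0])
next
  fix a assume a: "a \<in> image_piece"
  then have "\<bar>(a - f 0) \<bullet> e\<bar> \<le> 6 * \<epsilon>"
    using inner_deviation_le inner_deviation_ge by (force simp: inner_diff_left)
  then show "infdist a flat_piece \<le> 10 * \<epsilon>"
    using infdist_translated_hyperplane_le[OF norm_e] a eps_nonneg by fastforce
next
  fix b assume b: "b \<in> flat_piece"
  show "infdist b image_piece \<le> 10 * \<epsilon>"
  proof (rule field_le_epsilon)
    fix \<eta> :: real assume "0 < \<eta>"
    define t where "t = min (\<eta> / 3) (1/100)"
    have t: "0 < t" "t \<le> 1/100" "3 * t \<le> \<eta>" using \<open>0 < \<eta>\<close> by (auto simp: t_def)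
    have "infdist b image_piece \<le> (6 * \<epsilon> + t) + 2 * (6 * \<epsilon> + t)\<^sup>2"
      using t eps_le by (intro infdist_image_hyperplane_le[OF b]) auto
    then show "infdist b image_piece \<le> 10 * \<epsilon> + \<eta>"
      using vertical_offset_le[OF eps_nonneg eps_le t(1,2)] t(3) by linarith
  qed
qed

lemma theta_image_hyperplane_le: "theta (f ` (e_perp \<inter> U)) (f 0) (1/2) \<le> 20 * \<epsilon>"
proof -
  have "e \<noteq> 0" using norm_e by auto
  moreover have "e_perp = {x. e \<bullet> x = 0}" by (simp add: inner_commute)
  ultimately have "dim e_perp = DIM('a) - 1"
    using dim_hyperplane by simp
  then have "theta (f ` (e_perp \<inter> U)) (f 0) (1/2)
      \<le> HD image_piece flat_piece / (1/2)"
    using mem_U(1) by (intro theta_le_HD subspace_hyperplane2) auto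
  then show ?thesis using HD_image_hyperplane_le by simp
qed

end

theorem lemma2p3:
  fixes f :: "'a::euclidean_space \<Rightarrow> 'a" and U :: "'a set"
    and e1 :: 'a and \<epsilon> :: real
  assumes "DIM('a) \<ge> 2"
    and "e1 \<in> Basis"
    and "open U" and "cball 0 1 \<subseteq> U"
    and "embedding_on U f"
    and "weakly_qs (1 + \<epsilon>) U f"
    and "0 \<le> \<epsilon>" and "\<epsilon> \<le> 1/20"
    and "f e1 = e1" and "f (- e1) = - e1"
  shows "ball (f 0) (5/6) \<subseteq> f ` ball 0 1
    \<and> theta (f ` ({x. x \<bullet> e1 = 0} \<inter> U)) (f 0) (1/2) \<le> 20 * \<epsilon>"
proof -
  interpret normalized_weakly_qs U f e1 \<epsilon>
    using assms by unfold_locales auto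
  show ?thesis using ball_subset_image theta_image_hyperplane_le by blast
qed

end
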